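(* Let $N\in\mathbb N$, $\alpha,\beta>-1$, let $x_0<\dots<x_N$ be the Jacobi–Gauss–Lobatto (JGL) nodes and $h_0,\dots,h_N$ the associated Lagrange basis polynomials. For every $\mu>0$ and every $u\in\mathcal P_N$ one has $\hat I_-^\mu u\in\mathcal P_N$ and ${}^R\hat D_-^\mu u\in\mathcal P_N$ (after continuous extension to $x=-1$). Moreover $$ {}_0\mathcal P_N=\operatorname{span}\{\hat I_-^\mu h_j:\ 1\le j\le N\}. $$
   Context: For $\rho>0$ and $x\in(-1,1)$, $(I_-^\rho u)(x)=\frac{1}{\Gamma(\rho)}\int_{-1}^x (x-y)^{\rho-1}u(y)\,dy$, and $D^k=d^k/dx^k$. For $\mu\in(k-1,k)$, $k\in\mathbb N$, the Riemann–Liouville derivative is ${}^R D_-^\mu u=D^k(I_-^{k-\mu}u)$. The modified operators are $\hat I_-^\mu u=(1+x)^{-\mu}I_-^\mu u$ and ${}^R\hat D_-^\mu u=(1+x)^{\mu}\,{}^R D_-^\mu u$. $\mathcal P_N$ denotes polynomials of degree $\le N$ and ${}_0\mathcal P_N=\{\phi\in\mathcal P_N:\phi(-1)=0\}$. Jacobi polynomials $P_n^{(\alpha,\beta)}$ are in Szegő's normalization. The JGL nodes $x_0<x_1<\dots<x_N$ are the zeros of $(1-x^2)\frac{d}{dx}P_N^{(\alpha,\beta)}(x)$ (so $x_0=-1$, $x_N=1$), and $h_j\in\mathcal P_N$ is the Lagrange basis polynomial with $h_j(x_i)=\delta_{ij}$, $0\le i,j\le N$. *)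

theory Defs
  imports "HOL-Analysis.Analysis" "HOL-Computational_Algebra.Polynomial"
begin

text \<open>Jacobi polynomial in Szego's normalization (Szego, formula 4.3.2):
  P_n^(a,b)(x) = sum_k C(n+a, n-k) C(n+b, k) ((x-1)/2)^k ((x+1)/2)^(n-k).\<close>
definition jacobi_poly :: "nat \<Rightarrow> real \<Rightarrow> real \<Rightarrow> real poly" where
  "jacobi_poly n a b =
     (\<Sum>k\<le>n. smult (((real n + a) gchoose (n - k)) * ((real n + b) gchoose k))
                   ([:-1/2, 1/2:] ^ k * [:1/2, 1/2:] ^ (n - k)))"

definition frac_int :: "real \<Rightarrow> (real \<Rightarrow> real) \<Rightarrow> real \<Rightarrow> real" where
  "frac_int \<rho> u x =
     (if \<rho> = 0 then u x
      else (LBINT y:{-1..x}. (x - y) powr (\<rho> - 1) * u y) / Gamma \<rho>)"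

text \<open>Riemann-Liouville derivative D^k (I^(k-mu) u) with k = ceiling mu
  (so mu in (k-1,k) for non-integer mu; for integer mu this is the ordinary derivative).\<close>
definition rl_deriv :: "real \<Rightarrow> (real \<Rightarrow> real) \<Rightarrow> real \<Rightarrow> real" where
  "rl_deriv \<mu> u = (deriv ^^ nat \<lceil>\<mu>\<rceil>) (frac_int (of_int \<lceil>\<mu>\<rceil> - \<mu>) u)"

definition hat_frac_int :: "real \<Rightarrow> (real \<Rightarrow> real) \<Rightarrow> real \<Rightarrow> real" where
  "hat_frac_int \<mu> u x = (1 + x) powr (-\<mu>) * frac_int \<mu> u x"

definition hat_rl_deriv :: "real \<Rightarrow> (real \<Rightarrow> real) \<Rightarrow> real \<Rightarrow> real" where
  "hat_rl_deriv \<mu> u x = (1 + x) powr \<mu> * rl_deriv \<mu> u x"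

end

theory Submission
  imports Defs
begin

text \<open>By the Beta integral, \<open>I\<^sup>\<rho>\<close> maps \<open>(1 + x)^m\<close> to
  \<open>\<Gamma>(m + 1) / \<Gamma>(m + 1 + \<rho>) * (1 + x) powr (m + \<rho>)\<close>. Hence in the basis of powers
  \<open>(1 + x)^m\<close>, \<open>m \<le> N\<close>, the modified integral of order \<open>\<mu>\<close> is diagonal with positive
  entries: a bijection of the polynomials of degree \<open>\<le> N\<close> onto themselves that preserves those
  vanishing at \<open>-1\<close> (the coordinate \<open>m = 0\<close>). The Riemann-Liouville derivative differentiates
  the powers \<open>(1 + x) powr (m + \<rho>)\<close> termwise, and the factor \<open>(1 + x) powr \<mu>\<close> turns
  the result back into a polynomial.

  For \<open>t < -1\<close> all terms of Szego's sum for \<open>P\<^sub>N'(t)\<close> have the same sign, so the first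
  JGL node is \<open>-1\<close>. Then \<open>h\<^sub>1, \<dots>, h\<^sub>N\<close> is a basis of the polynomials of degree
  \<open>\<le> N\<close> vanishing at \<open>-1\<close>, and so is its image under the modified integral.\<close>

lemma has_integral_frac_int_shifted_monomial:
  fixes \<rho> x :: real
  assumes rho: "\<rho> > 0" and x: "x > -1"
  shows "((\<lambda>y. (x - y) powr (\<rho> - 1) * (1 + y) ^ m) has_integral
           Beta (real m + 1) \<rho> * (1 + x) powr (real m + \<rho>)) {-1..x}"
proof -
  define L where "L = 1 + x"
  have L: "L > 0" using x by (simp add: L_def)
  define F where "F = (\<lambda>s::real. s powr (real m + 1 - 1) * (1 - s) powr (\<rho> - 1))"
  have "(F has_integral Beta (real m + 1) \<rho>) (cbox 0 1)"
    unfolding F_def using has_integral_Beta_real[of "real m + 1" \<rho>] rho by simp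
  from has_integral_affinity'[OF this, of "1/L" "1/L"]
  have "((\<lambda>y. F (y / L + 1/L)) has_integral Beta (real m + 1) \<rho> * L)
          (cbox ((0 - 1/L) /\<^sub>R (1/L)) ((1 - 1/L) /\<^sub>R (1/L)))"
    using L by (simp add: mult.commute)
  also have "cbox ((0 - 1/L) /\<^sub>R (1/L)) ((1 - 1/L) /\<^sub>R (1/L)) = {-1..x}"
    using L by (simp add: L_def field_simps)
  finally have "((\<lambda>y. F (y / L + 1/L)) has_integral Beta (real m + 1) \<rho> * L) {-1..x}" .
  moreover have "L powr (real m + \<rho> - 1) * (Beta (real m + 1) \<rho> * L) =
                 Beta (real m + 1) \<rho> * (1 + x) powr (real m + \<rho>)"
    using L by (simp add: L_def powr_diff)
  ultimately have "((\<lambda>y. L powr (real m + \<rho> - 1) * F (y / L + 1/L)) has_integral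
                      Beta (real m + 1) \<rho> * (1 + x) powr (real m + \<rho>)) {-1..x}"
    using has_integral_mult_right by metis
  then show ?thesis
  proof (rule has_integral_spike_finite[of "{-1}", rotated 2])
    fix y assume y: "y \<in> {-1..x} - {-1}"
    have "F (y / L + 1/L) = ((1 + y) / L) powr real m * ((x - y) / L) powr (\<rho> - 1)"
      using L by (simp add: F_def L_def field_simps)
    also have "\<dots> = (1 + y) ^ m * (x - y) powr (\<rho> - 1) / L powr (real m + \<rho> - 1)"
      using y L by (simp add: powr_divide powr_realpow powr_add powr_diff field_simps)
    finally show "(x - y) powr (\<rho> - 1) * (1 + y) ^ m = L powr (real m + \<rho> - 1) * F (y / L + 1 / L)"
      using L by simp
  qed simp
qed

lemma poly_eq_sum_coeff:
  fixes p :: "'a::comm_semiring_1 poly"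
  assumes "degree p \<le> n"
  shows "poly p z = (\<Sum>i\<le>n. coeff p i * z ^ i)"
  unfolding poly_altdef
  by (rule sum.mono_neutral_left) (use assms in \<open>auto simp: coeff_eq_0\<close>)

definition shift_coeff :: "real poly \<Rightarrow> nat \<Rightarrow> real" where
  "shift_coeff u m = coeff (u \<circ>\<^sub>p [:-1, 1:]) m"

lemma poly_eq_sum_shift_coeff:
  assumes "degree u \<le> n"
  shows "poly u y = (\<Sum>m\<le>n. shift_coeff u m * (1 + y) ^ m)"
proof -
  have "poly u y = poly (u \<circ>\<^sub>p [:-1, 1:]) (1 + y)" by (simp add: poly_pcompose)
  also have "\<dots> = (\<Sum>m\<le>n. shift_coeff u m * (1 + y) ^ m)" unfolding shift_coeff_def
    by (rule poly_eq_sum_coeff) (use assms in \<open>simp add: degree_pcompose\<close>)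
  finally show ?thesis .
qed

lemma shift_coeff_0: "shift_coeff u 0 = poly u (-1)"
  unfolding shift_coeff_def by (simp add: poly_0_coeff_0[symmetric] poly_pcompose)

lemma shift_coeff_sum:
  "shift_coeff (\<Sum>j\<in>J. smult (c j) (h j)) m = (\<Sum>j\<in>J. c j * shift_coeff (h j) m)"
  unfolding shift_coeff_def by (simp add: pcompose_sum pcompose_smult coeff_sum)

definition frac_int_gain :: "real \<Rightarrow> nat \<Rightarrow> real" where
  "frac_int_gain \<rho> m = Gamma (real m + 1) / Gamma (real m + 1 + \<rho>)"

lemma frac_int_gain_pos: "\<rho> \<ge> 0 \<Longrightarrow> frac_int_gain \<rho> m > 0"
  unfolding frac_int_gain_def by (intro divide_pos_pos Gamma_real_pos) auto

lemma frac_int_gain_0 [simp]: "frac_int_gain 0 m = 1"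
proof -
  have "Gamma (real m + 1) > 0" by (rule Gamma_real_pos) simp
  then show ?thesis by (simp add: frac_int_gain_def del: Gamma_real_pos)
qed

definition shifted_powr_sum :: "(nat \<Rightarrow> real) \<Rightarrow> nat \<Rightarrow> real \<Rightarrow> real \<Rightarrow> real" where
  "shifted_powr_sum d n s t = (\<Sum>m\<le>n. d m * (1 + t) powr (real m + s))"

lemma frac_int_poly:
  fixes \<rho> x :: real and u :: "real poly"
  assumes rho: "\<rho> \<ge> 0" and x: "x > -1" and deg: "degree u \<le> n"
  shows "frac_int \<rho> (poly u) x = shifted_powr_sum (\<lambda>m. shift_coeff u m * frac_int_gain \<rho> m) n \<rho> x"
proof (cases "\<rho> = 0")
  case True
  then show ?thesis
    using x by (simp add: frac_int_def shifted_powr_sum_def poly_eq_sum_shift_coeff[OF deg] powr_realpow)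
next
  case False
  with rho have rho: "\<rho> > 0" by simp
  define g where "g = (\<lambda>m y. shift_coeff u m * ((x - y) powr (\<rho> - 1) * (1 + y) ^ m))"
  have g_int: "(g m has_integral shift_coeff u m * (Beta (real m + 1) \<rho> * (1 + x) powr (real m + \<rho>))) {-1..x}" for m
    unfolding g_def by (intro has_integral_mult_right has_integral_frac_int_shifted_monomial rho x)
  have "g m absolutely_integrable_on {-1..x}" for m
    unfolding g_def
    by (intro set_integrable_mult_right nonnegative_absolutely_integrable_1)
       (use has_integral_frac_int_shifted_monomial[OF rho x, of m] in \<open>auto simp: integrable_on_def\<close>)
  then have "(\<lambda>y. \<Sum>m\<le>n. g m y) absolutely_integrable_on {-1..x}"
    by (intro absolutely_integrable_sum) auto
  then have "set_integrable lborel {-1..x} (\<lambda>y. \<Sum>m\<le>n. g m y)"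
    unfolding set_integrable_def by (subst (asm) integrable_completion) (measurable, simp add: g_def)
  then have "(LBINT y:{-1..x}. (\<Sum>m\<le>n. g m y)) = integral {-1..x} (\<lambda>y. \<Sum>m\<le>n. g m y)"
    by (rule set_borel_integral_eq_integral(2))
  also have "\<dots> = (\<Sum>m\<le>n. shift_coeff u m * (Beta (real m + 1) \<rho> * (1 + x) powr (real m + \<rho>)))"
    by (intro integral_unique has_integral_sum g_int) auto
  finally have I: "(LBINT y:{-1..x}. (x - y) powr (\<rho> - 1) * poly u y) = \<dots>"
    by (simp add: g_def poly_eq_sum_shift_coeff[OF deg] sum_distrib_left mult_ac)
  have gain: "Beta (real m + 1) \<rho> / Gamma \<rho> = frac_int_gain \<rho> m" for m
    using Gamma_real_pos[OF rho] by (simp add: Beta_def frac_int_gain_def add_ac)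
  have "frac_int \<rho> (poly u) x =
      (\<Sum>m\<le>n. shift_coeff u m * (Beta (real m + 1) \<rho> * (1 + x) powr (real m + \<rho>))) / Gamma \<rho>"
    unfolding frac_int_def I using rho by simp
  also have "\<dots> = shifted_powr_sum (\<lambda>m. shift_coeff u m * frac_int_gain \<rho> m) n \<rho> x"
    unfolding shifted_powr_sum_def sum_divide_distrib
    by (intro sum.cong refl) (simp add: gain[symmetric])
  finally show ?thesis .
qed

definition shifted_poly :: "(nat \<Rightarrow> real) \<Rightarrow> nat \<Rightarrow> real poly" where
  "shifted_poly d n = (\<Sum>m\<le>n. monom (d m) m) \<circ>\<^sub>p [:1, 1:]"

lemma poly_shifted_poly: "poly (shifted_poly d n) t = (\<Sum>m\<le>n. d m * (1 + t) ^ m)"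
  by (simp add: shifted_poly_def poly_pcompose poly_sum poly_monom add_ac)

lemma degree_shifted_poly: "degree (shifted_poly d n) \<le> n"
proof -
  have "degree (\<Sum>m\<le>n. monom (d m) m) \<le> n"
    by (rule degree_sum_le) (auto intro: order.trans[OF degree_monom_le])
  then show ?thesis by (simp add: shifted_poly_def degree_pcompose)
qed

lemma shift_coeff_shifted_poly: "m \<le> n \<Longrightarrow> shift_coeff (shifted_poly d n) m = d m"
proof -
  assume "m \<le> n"
  have "[:1, 1::real:] \<circ>\<^sub>p [:-1, 1:] = [:0, 1:]" by (simp add: pcompose_pCons)
  then have "shift_coeff (shifted_poly d n) m = coeff (\<Sum>m\<le>n. monom (d m) m) m"
    by (simp add: shift_coeff_def shifted_poly_def pcompose_assoc[symmetric])
  also have "\<dots> = d m" by (rule coeff_sum_monom) fact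
  finally show ?thesis .
qed

lemma powr_mult_shifted_powr_sum:
  assumes "t > -1"
  shows "(1 + t) powr (- s) * shifted_powr_sum d n s t = poly (shifted_poly d n) t"
proof -
  have "(1 + t) powr (- s) * (1 + t) powr (real m + s) = (1 + t) ^ m" for m
    using assms by (simp add: powr_add[symmetric] powr_realpow)
  then show ?thesis
    by (simp add: shifted_powr_sum_def poly_shifted_poly sum_distrib_left mult.left_commute)
qed

lemma higher_deriv_shifted_powr_sum:
  assumes "\<And>t. t > -1 \<Longrightarrow> f t = shifted_powr_sum d n s t" and "t > -1"
  shows "(deriv ^^ k) f t = shifted_powr_sum (\<lambda>m. d m * (\<Prod>i<k. real m + s - real i)) n (s - real k) t"
  using assms(2)
proof (induction k arbitrary: t)
  case 0
  then show ?case using assms(1) by simp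
next
  case (Suc k)
  define d' where "d' = (\<lambda>m. d m * (\<Prod>i<k. real m + s - real i))"
  have "eventually (\<lambda>y. y \<in> {-1<..}) (nhds t)"
    using Suc.prems by (intro eventually_nhds_in_open) auto
  then have "eventually (\<lambda>y. (deriv ^^ k) f y = shifted_powr_sum d' n (s - real k) y) (nhds t)"
    by eventually_elim (use Suc.IH in \<open>auto simp: d'_def\<close>)
  then have "(deriv ^^ Suc k) f t = deriv (shifted_powr_sum d' n (s - real k)) t"
    by (simp add: deriv_cong_ev)
  also have "\<dots> = (\<Sum>m\<le>n. d' m * ((real m + (s - real k)) * (1 + t) powr (real m + (s - real k) - 1)))"
    unfolding shifted_powr_sum_def using Suc.prems
    by (intro DERIV_imp_deriv) (auto intro!: derivative_eq_intros sum.cong simp: mult_ac)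
  also have "\<dots> = shifted_powr_sum (\<lambda>m. d m * (\<Prod>i<Suc k. real m + s - real i)) n (s - real (Suc k)) t"
    unfolding shifted_powr_sum_def d'_def by (intro sum.cong refl) (simp add: algebra_simps)
  finally show ?case .
qed

lemma hat_rl_deriv_poly:
  fixes u :: "real poly"
  assumes mu: "\<mu> \<ge> 0" and deg: "degree u \<le> n"
  shows "\<exists>p. degree p \<le> n \<and> (\<forall>t>-1. hat_rl_deriv \<mu> (poly u) t = poly p t)"
proof -
  define k where "k = nat \<lceil>\<mu>\<rceil>"
  define \<rho> where "\<rho> = of_int \<lceil>\<mu>\<rceil> - \<mu>"
  have rho: "\<rho> \<ge> 0" unfolding \<rho>_def by linarith
  have rk: "\<rho> - real k = - \<mu>" unfolding \<rho>_def k_def using mu by simp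
  define d where "d = (\<lambda>m. shift_coeff u m * frac_int_gain \<rho> m * (\<Prod>i<k. real m + \<rho> - real i))"
  have "hat_rl_deriv \<mu> (poly u) t = poly (shifted_poly d n) t" if t: "t > -1" for t
  proof -
    have "rl_deriv \<mu> (poly u) t = shifted_powr_sum d n (-\<mu>) t"
      unfolding rl_deriv_def k_def[symmetric] \<rho>_def[symmetric] d_def rk[symmetric]
      by (rule higher_deriv_shifted_powr_sum[OF frac_int_poly[OF rho _ deg] t])
    then show ?thesis
      using powr_mult_shifted_powr_sum[OF t, of "-\<mu>"] by (simp add: hat_rl_deriv_def)
  qed
  then show ?thesis using degree_shifted_poly by blast
qed

definition hat_frac_int_poly :: "real \<Rightarrow> nat \<Rightarrow> real poly \<Rightarrow> real poly" where
  "hat_frac_int_poly \<mu> n u = shifted_poly (\<lambda>m. shift_coeff u m * frac_int_gain \<mu> m) n"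

lemma hat_frac_int_eq_poly:
  assumes "\<mu> \<ge> 0" "t > -1" "degree u \<le> n"
  shows "hat_frac_int \<mu> (poly u) t = poly (hat_frac_int_poly \<mu> n u) t"
  unfolding hat_frac_int_def hat_frac_int_poly_def frac_int_poly[OF assms]
  by (rule powr_mult_shifted_powr_sum) fact

lemma degree_hat_frac_int_poly: "degree (hat_frac_int_poly \<mu> n u) \<le> n"
  unfolding hat_frac_int_poly_def by (rule degree_shifted_poly)

lemma hat_frac_int_poly_linear:
  "hat_frac_int_poly \<mu> n (\<Sum>j\<in>J. smult (c j) (h j)) = (\<Sum>j\<in>J. smult (c j) (hat_frac_int_poly \<mu> n (h j)))"
  unfolding poly_eq_poly_eq_iff[symmetric] fun_eq_iff hat_frac_int_poly_def
  by (simp add: poly_sum poly_shifted_poly shift_coeff_sum sum_distrib_left sum_distrib_right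
      sum.swap[of _ J] mult_ac)

lemma poly_hat_frac_int_poly_minus_one:
  "poly (hat_frac_int_poly \<mu> n u) (-1) = frac_int_gain \<mu> 0 * poly u (-1)"
  by (simp add: hat_frac_int_poly_def poly_shifted_poly shift_coeff_0 zero_power)

lemma hat_frac_int_poly_surj:
  fixes p :: "real poly"
  assumes mu: "\<mu> \<ge> 0" and deg: "degree p \<le> n" and p: "poly p (-1) = 0"
  obtains u where "degree u \<le> n" "poly u (-1) = 0" "hat_frac_int_poly \<mu> n u = p"
proof
  define u where "u = shifted_poly (\<lambda>m. shift_coeff p m / frac_int_gain \<mu> m) n"
  show "degree u \<le> n" unfolding u_def by (rule degree_shifted_poly)
  show "poly u (-1) = 0" using p by (simp add: u_def poly_shifted_poly shift_coeff_0 zero_power)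
  have "poly (hat_frac_int_poly \<mu> n u) t = poly p t" for t
    using frac_int_gain_pos[OF mu]
    by (simp add: hat_frac_int_poly_def poly_shifted_poly u_def shift_coeff_shifted_poly
        poly_eq_sum_shift_coeff[OF deg] less_imp_neq[symmetric])
  then show "hat_frac_int_poly \<mu> n u = p" by (simp add: poly_eq_poly_eq_iff[symmetric] fun_eq_iff)
qed

lemma gchoose_pos:
  fixes a :: real
  assumes "a > real n - 1"
  shows "a gchoose n > 0"
  unfolding gbinomial_pochhammer' using assms
  by (intro divide_pos_pos pochhammer_pos) auto

lemma poly_jacobi_poly:
  "poly (jacobi_poly n a b) y =
     (\<Sum>k\<le>n. ((real n + a) gchoose (n - k)) * ((real n + b) gchoose k) *
              ((y - 1) / 2) ^ k * ((y + 1) / 2) ^ (n - k))"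
  unfolding jacobi_poly_def poly_sum
  by (intro sum.cong refl) (simp add: poly_power field_simps)

lemma poly_jacobi_poly_reflect:
  "poly (jacobi_poly n a b) (- y) =
     (-1) ^ n * (\<Sum>k\<le>n. ((real n + a) gchoose (n - k)) * ((real n + b) gchoose k) *
                          ((y + 1) / 2) ^ k * ((y - 1) / 2) ^ (n - k))"
  unfolding poly_jacobi_poly sum_distrib_left
proof (intro sum.cong refl)
  fix k assume "k \<in> {..n}"
  then have "(-1::real) ^ n = (-1) ^ k * (-1) ^ (n - k)" by (simp flip: power_add)
  moreover have "(- y - 1) / 2 = - ((y + 1) / 2)" "(- y + 1) / 2 = - ((y - 1) / 2)"
    by (simp_all add: field_simps)
  ultimately show "((real n + a) gchoose (n - k)) * ((real n + b) gchoose k) *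
                     ((- y - 1) / 2) ^ k * ((- y + 1) / 2) ^ (n - k) =
      (-1) ^ n * (((real n + a) gchoose (n - k)) * ((real n + b) gchoose k) *
                     ((y + 1) / 2) ^ k * ((y - 1) / 2) ^ (n - k))"
    by (simp only: power_minus[of "(y + 1) / 2"] power_minus[of "(y - 1) / 2"]) (simp add: mult_ac)
qed

lemma jacobi_poly_pderiv_nonzero_below:
  fixes a b t :: real
  assumes N: "N \<ge> 1" and a: "a > -1" and b: "b > -1" and t: "t < -1"
  shows "poly (pderiv (jacobi_poly N a b)) t \<noteq> 0"
proof -
  define c where "c k = ((real N + a) gchoose (N - k)) * ((real N + b) gchoose k)" for k
  have c_pos: "c k > 0" if "k \<le> N" for k
    unfolding c_def using that a b by (intro mult_pos_pos gchoose_pos) (auto simp: of_nat_diff)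
  define s where "s = - t"
  have s: "s > 1" using t by (simp add: s_def)
  define e where "e k = real k / 2 * ((s + 1) / 2) ^ (k - 1) * ((s - 1) / 2) ^ (N - k)
                        + real (N - k) / 2 * ((s + 1) / 2) ^ k * ((s - 1) / 2) ^ (N - k - 1)" for k
  have "((\<lambda>y. \<Sum>k\<le>N. c k * ((y + 1) / 2) ^ k * ((y - 1) / 2) ^ (N - k)) has_real_derivative
          (\<Sum>k\<le>N. c k * e k)) (at s)"
    unfolding e_def by (intro DERIV_sum) (auto intro!: derivative_eq_intros simp: algebra_simps)
  then have "((\<lambda>y. poly (jacobi_poly N a b) (- y)) has_real_derivative (-1) ^ N * (\<Sum>k\<le>N. c k * e k)) (at s)"
    unfolding poly_jacobi_poly_reflect c_def[symmetric] by (rule DERIV_cmult)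
  moreover have "((\<lambda>y. poly (jacobi_poly N a b) (- y)) has_real_derivative
                   - poly (pderiv (jacobi_poly N a b)) (- s)) (at s)"
    by (auto intro!: derivative_eq_intros poly_DERIV[THEN DERIV_chain2])
  ultimately have "- poly (pderiv (jacobi_poly N a b)) t = (-1) ^ N * (\<Sum>k\<le>N. c k * e k)"
    unfolding s_def by (simp add: DERIV_unique)
  moreover have "(\<Sum>k\<le>N. c k * e k) > 0"
  proof (rule sum_pos2[of _ 0])
    show "0 < c 0 * e 0" using c_pos[of 0] N s by (simp add: e_def)
    show "0 \<le> c k * e k" if "k \<in> {..N}" for k
      using that s c_pos[of k] unfolding e_def by (intro mult_nonneg_nonneg add_nonneg_nonneg) auto
  qed auto
  ultimately show ?thesis by auto
qed

lemma jgl_node_ge_minus_one: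
  fixes a b t :: real
  assumes "N \<ge> 1" "a > -1" "b > -1"
    and root: "poly ([:1, 0, -1:] * pderiv (jacobi_poly N a b)) t = 0"
  shows "t \<ge> -1"
proof (rule ccontr)
  assume "\<not> t \<ge> -1"
  then have t: "t < -1" by simp
  then have "1 * 1 < (- t) * (- t)" by (intro mult_strict_mono) auto
  then have "poly [:1, 0, -1:] t \<noteq> 0" by simp
  with root jacobi_poly_pderiv_nonzero_below[OF assms(1-3) t] show False by simp
qed

lemma first_jgl_node:
  fixes a b :: real and x :: "nat \<Rightarrow> real"
  assumes "N \<ge> 1" "a > -1" "b > -1"
    and x_mono: "strict_mono_on {0..N} x"
    and x_nodes: "x ` {0..N} = {t. poly ([:1, 0, -1:] * pderiv (jacobi_poly N a b)) t = 0}"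
  shows "x 0 = -1"
proof -
  have "-1 \<in> x ` {0..N}" unfolding x_nodes by simp
  then obtain i where "i \<le> N" "x i = -1" by auto
  then have "x 0 \<le> -1" using strict_mono_on_leD[OF x_mono, of 0 i] by simp
  moreover have "x 0 \<ge> -1"
    using x_nodes by (intro jgl_node_ge_minus_one[OF assms(1-3)]) auto
  ultimately show ?thesis by simp
qed

lemma lagrange_interpolation:
  fixes x :: "nat \<Rightarrow> 'a::idom" and h :: "nat \<Rightarrow> 'a poly"
  assumes x_inj: "inj_on x {0..N}"
    and h_deg: "\<And>j. j \<le> N \<Longrightarrow> degree (h j) \<le> N"
    and h_lag: "\<And>i j. i \<le> N \<Longrightarrow> j \<le> N \<Longrightarrow> poly (h j) (x i) = (if i = j then 1 else 0)"
    and deg: "degree u \<le> N"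
  shows "u = (\<Sum>j=0..N. smult (poly u (x j)) (h j))"
proof (rule ccontr)
  define r where "r = u - (\<Sum>j=0..N. smult (poly u (x j)) (h j))"
  assume "u \<noteq> (\<Sum>j=0..N. smult (poly u (x j)) (h j))"
  then have r0: "r \<noteq> 0" by (simp add: r_def)
  have "degree r \<le> N" unfolding r_def
    by (intro degree_diff_le deg degree_sum_le order.trans[OF degree_smult_le] h_deg) auto
  have "poly r (x i) = 0" if "i \<le> N" for i
  proof -
    have "(\<Sum>j=0..N. poly u (x j) * poly (h j) (x i)) = (\<Sum>j=0..N. if i = j then poly u (x j) else 0)"
      by (intro sum.cong refl) (use that h_lag in auto)
    then show ?thesis using that by (simp add: r_def poly_sum)
  qed
  then have "x ` {0..N} \<subseteq> {t. poly r t = 0}" by auto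
  then have "card (x ` {0..N}) \<le> card {t. poly r t = 0}"
    by (intro card_mono poly_roots_finite r0)
  also have "\<dots> \<le> N" using card_poly_roots_bound[OF r0] \<open>degree r \<le> N\<close> by simp
  finally show False using card_image[OF x_inj] by simp
qed

lemma poly_eqI_on_infinite:
  fixes p q :: "'a::idom poly"
  assumes "infinite S" "\<And>t. t \<in> S \<Longrightarrow> poly p t = poly q t"
  shows "p = q"
proof (rule ccontr)
  assume "p \<noteq> q"
  then have "finite {t. poly (p - q) t = 0}" by (intro poly_roots_finite) simp
  moreover have "S \<subseteq> {t. poly (p - q) t = 0}" using assms(2) by auto
  ultimately show False using assms(1) finite_subset by blast
qed

lemma vanishing_polys_eq_span_hat_frac_int:
  fixes x :: "nat \<Rightarrow> real" and h :: "nat \<Rightarrow> real poly" and p :: "real poly"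
  assumes mu: "\<mu> \<ge> 0"
    and x_inj: "inj_on x {0..N}" and x0: "x 0 = -1"
    and h_deg: "\<And>j. j \<le> N \<Longrightarrow> degree (h j) \<le> N"
    and h_lag: "\<And>i j. i \<le> N \<Longrightarrow> j \<le> N \<Longrightarrow> poly (h j) (x i) = (if i = j then 1 else 0)"
  shows "(degree p \<le> N \<and> poly p (-1) = 0) \<longleftrightarrow>
         (\<exists>c. \<forall>t\<in>{-1<..<1}. poly p t = (\<Sum>j=1..N. c j * hat_frac_int \<mu> (poly (h j)) t))"
proof -
  define H where "H c = hat_frac_int_poly \<mu> N (\<Sum>j=1..N. smult (c j) (h j))" for c
  have poly_H: "poly (H c) t = (\<Sum>j=1..N. c j * hat_frac_int \<mu> (poly (h j)) t)" if "t > -1" for c t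
    using that by (simp add: H_def hat_frac_int_poly_linear poly_sum hat_frac_int_eq_poly[OF mu _ h_deg])
  have "(degree p \<le> N \<and> poly p (-1) = 0) \<longleftrightarrow> (\<exists>c. p = H c)"
  proof
    assume "degree p \<le> N \<and> poly p (-1) = 0"
    then obtain u where u: "degree u \<le> N" "poly u (-1) = 0" "hat_frac_int_poly \<mu> N u = p"
      using hat_frac_int_poly_surj[OF mu] by blast
    have "u = (\<Sum>j=0..N. smult (poly u (x j)) (h j))"
      by (rule lagrange_interpolation[OF x_inj h_deg h_lag u(1)])
    also have "\<dots> = (\<Sum>j=1..N. smult (poly u (x j)) (h j))"
      using u(2) x0 by (simp add: sum.atLeast_Suc_atMost)
    finally have "p = H (\<lambda>j. poly u (x j))" using u(3) by (simp add: H_def)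
    then show "\<exists>c. p = H c" by blast
  next
    assume "\<exists>c. p = H c"
    then obtain c where p: "p = H c" ..
    have "poly (h j) (-1) = 0" if "1 \<le> j" "j \<le> N" for j
      using h_lag[of 0 j] that x0 by simp
    then show "degree p \<le> N \<and> poly p (-1) = 0"
      by (simp add: p H_def degree_hat_frac_int_poly poly_hat_frac_int_poly_minus_one poly_sum)
  qed
  also have "\<dots> \<longleftrightarrow> (\<exists>c. \<forall>t\<in>{-1<..<1}. poly p t = poly (H c) t)"
  proof (intro ex_cong1 iffI)
    fix c assume "\<forall>t\<in>{-1<..<1}. poly p t = poly (H c) t"
    then show "p = H c" by (intro poly_eqI_on_infinite[of "{-1<..<1}"]) auto
  qed simp
  finally show ?thesis by (simp add: poly_H)
qed

theorem lemma3p2: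
  fixes N :: nat and \<alpha> \<beta> :: real
    and x :: "nat \<Rightarrow> real" and h :: "nat \<Rightarrow> real poly"
  assumes N: "N \<ge> 1"
    and ab: "\<alpha> > -1" "\<beta> > -1"
    and x_mono: "strict_mono_on {0..N} x"
    and x_nodes: "x ` {0..N} =
          {t. poly ([:1, 0, -1:] * pderiv (jacobi_poly N \<alpha> \<beta>)) t = 0}"
    and h_deg: "\<And>j. j \<le> N \<Longrightarrow> degree (h j) \<le> N"
    and h_lag: "\<And>i j. i \<le> N \<Longrightarrow> j \<le> N \<Longrightarrow> poly (h j) (x i) = (if i = j then 1 else 0)"
  shows "\<forall>\<mu>>0.
     (\<forall>u :: real poly. degree u \<le> N \<longrightarrow>
        (\<exists>p :: real poly. degree p \<le> N \<and>
            (\<forall>t\<in>{-1<..<1}. hat_frac_int \<mu> (poly u) t = poly p t)) \<and>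
        (\<exists>p :: real poly. degree p \<le> N \<and>
            (\<forall>t\<in>{-1<..<1}. hat_rl_deriv \<mu> (poly u) t = poly p t))) \<and>
     (\<forall>p :: real poly. (degree p \<le> N \<and> poly p (-1) = 0) \<longleftrightarrow>
        (\<exists>c :: nat \<Rightarrow> real. \<forall>t\<in>{-1<..<1}.
            poly p t = (\<Sum>j=1..N. c j * hat_frac_int \<mu> (poly (h j)) t)))"
proof (intro allI impI conjI)
  fix \<mu> :: real
  assume "\<mu> > 0"
  then have mu: "\<mu> \<ge> 0" by simp
  {
    fix u :: "real poly"
    assume deg: "degree u \<le> N"
    show "\<exists>p. degree p \<le> N \<and> (\<forall>t\<in>{-1<..<1}. hat_frac_int \<mu> (poly u) t = poly p t)"
      using hat_frac_int_eq_poly[OF mu _ deg] degree_hat_frac_int_poly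
      by (intro exI[of _ "hat_frac_int_poly \<mu> N u"]) auto
    show "\<exists>p. degree p \<le> N \<and> (\<forall>t\<in>{-1<..<1}. hat_rl_deriv \<mu> (poly u) t = poly p t)"
      using hat_rl_deriv_poly[OF mu deg] by auto
  }
  fix p :: "real poly"
  have x0: "x 0 = -1" by (rule first_jgl_node[OF N ab x_mono x_nodes])
  show "(degree p \<le> N \<and> poly p (-1) = 0) \<longleftrightarrow>
        (\<exists>c. \<forall>t\<in>{-1<..<1}. poly p t = (\<Sum>j=1..N. c j * hat_frac_int \<mu> (poly (h j)) t))"
    by (rule vanishing_polys_eq_span_hat_frac_int[OF mu strict_mono_on_imp_inj_on[OF x_mono] x0 h_deg h_lag])
qed

end
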